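(* Let $n\ge1$. Then $v_1+v_2+\cdots+v_{2n}=n(n+1)$.
   Context: $k$ is a field of characteristic zero, $\mathcal O_n=k[x]/(x^{n+1})$, elements of $\mathcal O_n$ identified with multiplication operators, $\operatorname{ad}_x(\delta)=x\delta-\delta x$. The order filtration is $\mathcal D^p(\mathcal O_n)=\{\delta\in\operatorname{End}_k(\mathcal O_n):[f_0,[f_1,\dots,[f_p,\delta]\dots]]=0\ \forall f_i\in\mathcal O_n\}$. For $\delta\in\mathcal D^p(\mathcal O_n)$, $\operatorname{ad}_x^p(\delta)$ is multiplication by an element of $\mathcal O_n$ and $\operatorname{ad}_x^p:\mathcal D^p(\mathcal O_n)\to\mathcal O_n$ is $\mathcal O_n$-linear, so its image is an ideal $(x^{v_p})$ of $\mathcal O_n$; $v_p\in\{0,\dots,n\}$ denotes the corresponding exponent. *)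

theory Defs
  imports "HOL-Computational_Algebra.Polynomial" "Jordan_Normal_Form.Matrix"
begin

text \<open>O_n = k[x]/(x^(n+1)) is modelled by its monomial basis 1, x, ..., x^n;
  End_k(O_n) is the set of (n+1) x (n+1) matrices over k.
  An element of O_n is represented by any polynomial f (only its residue mod x^(n+1)
  matters); mult_op n f is the matrix of multiplication by f.\<close>

definition mult_op :: "nat \<Rightarrow> 'a::field poly \<Rightarrow> 'a mat" where
  "mult_op n f = mat (Suc n) (Suc n) (\<lambda>(i,j). if j \<le> i then coeff f (i - j) else 0)"

definition comm :: "'a::field mat \<Rightarrow> 'a mat \<Rightarrow> 'a mat" where
  "comm A B = A * B - B * A"

definition diff_ops :: "nat \<Rightarrow> nat \<Rightarrow> 'a::field mat set" where
  "diff_ops n p = {\<delta> \<in> carrier_mat (Suc n) (Suc n).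
     \<forall>fs :: 'a poly list. length fs = Suc p \<longrightarrow>
        foldr (\<lambda>f acc. comm (mult_op n f) acc) fs \<delta> = 0\<^sub>m (Suc n) (Suc n)}"

definition ad_x :: "nat \<Rightarrow> nat \<Rightarrow> 'a::field mat \<Rightarrow> 'a mat" where
  "ad_x n p = ((\<lambda>D. comm (mult_op n [:0, 1:]) D) ^^ p)"

definition vexp :: "'a::field itself \<Rightarrow> nat \<Rightarrow> nat \<Rightarrow> nat" where
  "vexp _ n p = (THE v. v \<le> n \<and>
      ad_x n p ` (diff_ops n p :: 'a mat set) = {mult_op n (monom 1 v * g) | g. True})"

end

theory Submission
  imports Defs
begin

text \<open>Write X for the shift, i.e. multiplication by x. A matrix commuting with X is a
  multiplication operator, and ad_f commutes with ad_X; hence D^p is the kernel of ad_X^(p+1)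
  and ad_X^p maps it into the multiplication operators.

  For i \<le> n let B_i be the matrix supported on the i-th superdiagonal with entries
  P_i(0), ..., P_i(n - i), where P_i has degree 2i and vanishes at -i, ..., -1 and at
  n - i + 1, ..., n. On such band matrices ad_X moves the support one diagonal down and acts on
  the entries as the backward difference, so ad_X^(2i+1) B_i = 0 while ad_X^(2i) B_i is a nonzero
  multiple of x^i. As ad_X is skew-adjoint for the trace pairing, tr (B_i ad_X^p D) vanishes
  for 2i < p, and this trace is a nonzero multiple of the coefficient of x^i in ad_X^p D.
  Conversely, ad_X^(2v - p) B_v composed with multiplication operators realises the whole ideal
  (x^v) for v = ceil(p/2). So v_p = ceil(p/2) for p \<le> 2n, and these sum to n(n + 1).\<close>

abbreviation shift :: "nat \<Rightarrow> 'a::field mat" where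
  "shift n \<equiv> mult_op n [:0, 1:]"

section \<open>Multiplication operators and commutators\<close>

lemma mult_op_carrier [simp]: "mult_op n f \<in> carrier_mat (Suc n) (Suc n)"
  by (simp add: mult_op_def)

lemma dim_mult_op [simp]: "dim_row (mult_op n f) = Suc n" "dim_col (mult_op n f) = Suc n"
  by (simp_all add: mult_op_def)

lemma index_mult_op:
  "i \<le> n \<Longrightarrow> j \<le> n \<Longrightarrow> mult_op n f $$ (i, j) = (if j \<le> i then coeff f (i - j) else 0)"
  by (simp add: mult_op_def)

lemma index_shift:
  "i \<le> n \<Longrightarrow> j \<le> n \<Longrightarrow> (shift n :: 'a::field mat) $$ (i, j) = (if i = Suc j then 1 else 0)"
  by (auto simp: index_mult_op coeff_pCons split: nat.splits)

lemma mult_op_mult: "mult_op n f * mult_op n g = mult_op n (f * g)"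
proof (rule eq_matI)
  fix i j assume "i < dim_row (mult_op n (f * g))" "j < dim_col (mult_op n (f * g))"
  then have i: "i \<le> n" and j: "j \<le> n" by auto
  have "(mult_op n f * mult_op n g) $$ (i, j)
      = (\<Sum>k<Suc n. (if k \<le> i then coeff f (i - k) else 0) * (if j \<le> k then coeff g (k - j) else 0))"
    using i j by (auto simp: scalar_prod_def lessThan_atLeast0 index_mult_op intro!: sum.cong)
  also have "\<dots> = (\<Sum>k\<in>{j..i}. coeff f (i - k) * coeff g (k - j))"
    using i by (intro sum.mono_neutral_cong_right) auto
  also have "\<dots> = (if j \<le> i then coeff (f * g) (i - j) else 0)"
  proof (cases "j \<le> i")
    case True
    have "coeff (f * g) (i - j) = (\<Sum>m\<le>i - j. coeff f m * coeff g (i - j - m))"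
      by (simp add: coeff_mult)
    also have "\<dots> = (\<Sum>k\<in>{j..i}. coeff f (i - k) * coeff g (k - j))"
      by (rule sum.reindex_bij_witness[of _ "\<lambda>k. i - k" "\<lambda>m. i - m"])
        (use True in \<open>auto simp: add.commute\<close>)
    finally show ?thesis using True by simp
  qed simp
  also have "\<dots> = mult_op n (f * g) $$ (i, j)"
    using i j by (simp add: index_mult_op)
  finally show "(mult_op n f * mult_op n g) $$ (i, j) = mult_op n (f * g) $$ (i, j)" .
qed auto

lemma mult_op_commute: "mult_op n f * mult_op n g = mult_op n g * mult_op n f"
  by (simp add: mult_op_mult mult.commute)

lemma smult_mult_op: "c \<cdot>\<^sub>m mult_op n f = mult_op n (Polynomial.smult c f)"
  by (rule eq_matI) (auto simp: mult_op_def)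

lemma comm_carrier [simp]:
  "A \<in> carrier_mat m m \<Longrightarrow> B \<in> carrier_mat m m \<Longrightarrow> comm A B \<in> carrier_mat m m"
  unfolding comm_def by (rule minus_carrier_mat) auto

lemma comm_zero_right [simp]: "A \<in> carrier_mat m m \<Longrightarrow> comm A (0\<^sub>m m m) = 0\<^sub>m m m"
  unfolding comm_def by (rule eq_matI) auto

lemma comm_mult_op: "comm (mult_op n f) (mult_op n g) = 0\<^sub>m (Suc n) (Suc n)"
  unfolding comm_def mult_op_commute[of n f g] by (rule minus_r_inv_mat) (simp add: mult_op_mult)

lemma minus_minus_swap_mat:
  fixes x y z w :: "'a::ab_group_add mat"
  assumes "x \<in> carrier_mat m m" "y \<in> carrier_mat m m" "z \<in> carrier_mat m m" "w \<in> carrier_mat m m"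
  shows "(x - y) - (z - w) = (x - z) - (y - w)"
  by (rule eq_matI) (use assms in auto)

lemma comm_comm_expand:
  assumes A: "A \<in> carrier_mat m m" and B: "B \<in> carrier_mat m m" and D: "D \<in> carrier_mat m m"
  shows "comm A (comm B D) = (A * (B * D) - A * (D * B)) - (B * (D * A) - D * (B * A))"
proof -
  have "A * (B * D - D * B) = A * (B * D) - A * (D * B)"
    by (rule mult_minus_distrib_mat) (use A B D in auto)
  moreover have "(B * D - D * B) * A = B * (D * A) - D * (B * A)"
    by (subst minus_mult_distrib_mat) (use A B D in auto)
  ultimately show ?thesis
    unfolding comm_def by simp
qed

lemma comm_comm_swap:
  assumes A: "A \<in> carrier_mat m m" and B: "B \<in> carrier_mat m m" and D: "D \<in> carrier_mat m m"
    and AB: "A * B = B * A"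
  shows "comm A (comm B D) = comm B (comm A D)"
proof -
  have "A * (B * D) = A * B * D"
    using A B D by simp
  also have "\<dots> = B * (A * D)"
    using A B D by (simp add: AB)
  finally have ABD: "A * (B * D) = B * (A * D)" .
  have DBA: "D * (B * A) = D * (A * B)"
    using AB by simp
  show ?thesis
    unfolding comm_comm_expand[OF A B D] comm_comm_expand[OF B A D] ABD DBA
    by (intro minus_minus_swap_mat) (use A B D in auto)
qed

lemma comm_mult_right:
  assumes A: "A \<in> carrier_mat m m" and B: "B \<in> carrier_mat m m" and M: "M \<in> carrier_mat m m"
    and AB: "A * B = B * A"
  shows "comm A (M * B) = comm A M * B"
proof -
  have "M * B * A = M * A * B"
    using A B M by (simp add: AB)
  then have "comm A (M * B) = A * M * B - M * A * B"
    unfolding comm_def using A B M by simp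
  also have "\<dots> = comm A M * B"
    unfolding comm_def by (rule minus_mult_distrib_mat[symmetric]) (use A B M in auto)
  finally show ?thesis .
qed

lemma index_shift_mult:
  assumes "M \<in> carrier_mat (Suc n) (Suc n)" "i \<le> n" "j \<le> n"
  shows "(shift n * M) $$ (i, j) = (if 1 \<le> i then M $$ (i - 1, j) else 0)"
proof -
  have "(shift n * M) $$ (i, j) = (\<Sum>k<Suc n. shift n $$ (i, k) * M $$ (k, j))"
    using assms by (simp add: scalar_prod_def lessThan_atLeast0)
  also have "\<dots> = (\<Sum>k<Suc n. if k = i - 1 \<and> 1 \<le> i then M $$ (k, j) else 0)"
    using assms by (intro sum.cong) (auto simp: index_shift)
  finally show ?thesis
    using assms by (auto simp: sum.delta)
qed

lemma index_mult_shift: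
  assumes "M \<in> carrier_mat (Suc n) (Suc n)" "i \<le> n" "j \<le> n"
  shows "(M * shift n) $$ (i, j) = (if j < n then M $$ (i, Suc j) else 0)"
proof -
  have "(M * shift n) $$ (i, j) = (\<Sum>k<Suc n. M $$ (i, k) * shift n $$ (k, j))"
    using assms by (simp add: scalar_prod_def lessThan_atLeast0)
  also have "\<dots> = (\<Sum>k<Suc n. if k = Suc j then M $$ (i, k) else 0)"
    using assms by (intro sum.cong) (auto simp: index_shift)
  finally show ?thesis
    using assms by (auto simp: sum.delta)
qed

lemma index_comm_shift:
  assumes "M \<in> carrier_mat (Suc n) (Suc n)" "i \<le> n" "j \<le> n"
  shows "comm (shift n) M $$ (i, j)
    = (if 1 \<le> i then M $$ (i - 1, j) else 0) - (if j < n then M $$ (i, Suc j) else 0)"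
proof -
  have "comm (shift n) M $$ (i, j) = (shift n * M) $$ (i, j) - (M * shift n) $$ (i, j)"
    unfolding comm_def using assms by (subst index_minus_mat) auto
  then show ?thesis
    using assms by (simp only: index_shift_mult index_mult_shift)
qed

text \<open>A matrix commuting with the shift is constant along diagonals and lower triangular,
  hence it is the multiplication operator by the polynomial read off its first column.\<close>

lemma comm_shift_eq_0_imp_mult_op:
  assumes M: "M \<in> carrier_mat (Suc n) (Suc n)" and z: "comm (shift n) M = 0\<^sub>m (Suc n) (Suc n)"
  shows "\<exists>f. M = mult_op n f"
proof -
  have step: "M $$ (i, Suc j) = (if 1 \<le> i then M $$ (i - 1, j) else 0)" if "i \<le> n" "j < n" for i j
    using index_comm_shift[OF M, of i j] z that by simp
  have toeplitz: "M $$ (i, j) = (if j \<le> i then M $$ (i - j, 0) else 0)" if "i \<le> n" "j \<le> n" for i j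
    using that
  proof (induction j arbitrary: i)
    case (Suc j)
    then show ?case
      by (cases i) (simp_all add: step)
  qed simp
  define f where "f = (\<Sum>k<Suc n. monom (M $$ (k, 0)) k)"
  have "M = mult_op n f"
  proof (rule eq_matI)
    fix i j assume "i < dim_row (mult_op n f)" "j < dim_col (mult_op n f)"
    then have i: "i \<le> n" and j: "j \<le> n" by auto
    show "M $$ (i, j) = mult_op n f $$ (i, j)"
      unfolding toeplitz[OF i j] using i j by (auto simp: index_mult_op f_def coeff_sum)
  qed (use M in auto)
  then show ?thesis ..
qed

section \<open>Powers of \<open>ad_x\<close> and the order filtration\<close>

lemma ad_x_0 [simp]: "ad_x n 0 D = D"
  by (simp add: ad_x_def)

lemma ad_x_Suc: "ad_x n (Suc p) D = comm (shift n) (ad_x n p D)"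
  by (simp add: ad_x_def)

lemma ad_x_Suc_right: "ad_x n (Suc p) D = ad_x n p (comm (shift n) D)"
  by (simp add: ad_x_def funpow_Suc_right del: funpow.simps)

lemma ad_x_add: "ad_x n (p + q) D = ad_x n p (ad_x n q D)"
  by (simp add: ad_x_def funpow_add)

lemma ad_x_carrier [simp]:
  "D \<in> carrier_mat (Suc n) (Suc n) \<Longrightarrow> ad_x n p D \<in> carrier_mat (Suc n) (Suc n)"
  by (induction p) (simp_all add: ad_x_Suc)

lemma ad_x_zero [simp]: "ad_x n p (0\<^sub>m (Suc n) (Suc n)) = 0\<^sub>m (Suc n) (Suc n)"
  by (induction p) (simp_all add: ad_x_Suc)

lemma comm_mult_op_ad_x:
  assumes "D \<in> carrier_mat (Suc n) (Suc n)"
  shows "comm (mult_op n f) (ad_x n p D) = ad_x n p (comm (mult_op n f) D)"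
proof (induction p)
  case (Suc p)
  have "comm (mult_op n f) (ad_x n (Suc p) D) = comm (shift n) (comm (mult_op n f) (ad_x n p D))"
    unfolding ad_x_Suc using assms by (intro comm_comm_swap mult_op_commute) auto
  then show ?case
    by (simp add: Suc.IH ad_x_Suc)
qed simp

lemma ad_x_mult_mult_op:
  assumes "M \<in> carrier_mat (Suc n) (Suc n)"
  shows "ad_x n p (M * mult_op n g) = ad_x n p M * mult_op n g"
proof (induction p)
  case (Suc p)
  have "comm (shift n) (ad_x n p M * mult_op n g) = comm (shift n) (ad_x n p M) * mult_op n g"
    using assms by (intro comm_mult_right mult_op_commute) auto
  then show ?case
    by (simp add: ad_x_Suc Suc.IH)
qed simp

lemma foldr_comm_replicate_shift:
  "foldr (\<lambda>f acc. comm (mult_op n f) acc) (replicate k [:0, 1:]) D = ad_x n k D"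
  by (induction k) (simp_all add: ad_x_Suc)

text \<open>Peeling off the innermost commutator: \<open>ad_x\<^sup>k\<close> kills \<open>[f, D]\<close>, because
  \<open>ad_x\<^sup>k D\<close> commutes with the shift and is therefore a multiplication operator.\<close>

lemma foldr_comm_mult_op_eq_0:
  assumes "D \<in> carrier_mat (Suc n) (Suc n)" "ad_x n (length fs) D = 0\<^sub>m (Suc n) (Suc n)"
  shows "foldr (\<lambda>f acc. comm (mult_op n f) acc) fs D = 0\<^sub>m (Suc n) (Suc n)"
  using assms
proof (induction fs arbitrary: D rule: rev_induct)
  case (snoc f fs)
  have "comm (shift n) (ad_x n (length fs) D) = 0\<^sub>m (Suc n) (Suc n)"
    using snoc.prems by (simp add: ad_x_Suc[symmetric])
  then obtain h where "ad_x n (length fs) D = mult_op n h"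
    using comm_shift_eq_0_imp_mult_op snoc.prems(1) ad_x_carrier by blast
  then have "ad_x n (length fs) (comm (mult_op n f) D) = 0\<^sub>m (Suc n) (Suc n)"
    using comm_mult_op_ad_x[OF snoc.prems(1), symmetric] by (simp add: comm_mult_op)
  then show ?case
    using snoc.IH snoc.prems(1) by simp
qed simp

lemma diff_ops_iff:
  "D \<in> diff_ops n p \<longleftrightarrow> D \<in> carrier_mat (Suc n) (Suc n) \<and> ad_x n (Suc p) D = 0\<^sub>m (Suc n) (Suc n)"
proof
  assume D: "D \<in> diff_ops n p"
  have "length (replicate (Suc p) ([:0, 1:] :: 'a poly)) = Suc p"
    by simp
  with D show "D \<in> carrier_mat (Suc n) (Suc n) \<and> ad_x n (Suc p) D = 0\<^sub>m (Suc n) (Suc n)"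
    unfolding diff_ops_def foldr_comm_replicate_shift[symmetric] by blast
next
  assume "D \<in> carrier_mat (Suc n) (Suc n) \<and> ad_x n (Suc p) D = 0\<^sub>m (Suc n) (Suc n)"
  then show "D \<in> diff_ops n p"
    unfolding diff_ops_def by (auto intro: foldr_comm_mult_op_eq_0)
qed

lemma ad_x_diff_ops_mult_op:
  assumes "D \<in> diff_ops n p"
  shows "\<exists>f. ad_x n p D = mult_op n f"
  using assms comm_shift_eq_0_imp_mult_op[of "ad_x n p D" n] by (simp add: diff_ops_iff ad_x_Suc)

section \<open>The trace pairing\<close>

definition trace :: "'a::comm_ring mat \<Rightarrow> 'a" where
  "trace A = (\<Sum>i<dim_row A. A $$ (i, i))"

lemma trace_mult_commute:
  fixes A B :: "'a::comm_ring mat"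
  assumes A: "A \<in> carrier_mat m k" and B: "B \<in> carrier_mat k m"
  shows "trace (A * B) = trace (B * A)"
proof -
  have "trace (A * B) = (\<Sum>i<m. \<Sum>j<k. A $$ (i, j) * B $$ (j, i))"
    unfolding trace_def using A B by (auto simp: scalar_prod_def lessThan_atLeast0 intro!: sum.cong)
  also have "\<dots> = (\<Sum>j<k. \<Sum>i<m. B $$ (j, i) * A $$ (i, j))"
    by (subst sum.swap) (simp add: mult.commute)
  also have "\<dots> = trace (B * A)"
    unfolding trace_def using A B by (auto simp: scalar_prod_def lessThan_atLeast0 intro!: sum.cong)
  finally show ?thesis .
qed

lemma trace_zero [simp]: "trace (0\<^sub>m m m) = 0"
  unfolding trace_def by (rule sum.neutral) simp

lemma trace_minus:
  fixes A B :: "'a::comm_ring mat"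
  assumes "A \<in> carrier_mat m m" "B \<in> carrier_mat m m"
  shows "trace (A - B) = trace A - trace B"
  unfolding trace_def using assms by (simp add: sum_subtractf)

lemma trace_mult_comm_skew:
  assumes A: "A \<in> carrier_mat m m" and B: "B \<in> carrier_mat m m" and D: "D \<in> carrier_mat m m"
  shows "trace (B * comm A D) = - trace (comm A B * D)"
proof -
  have "trace (B * comm A D) = trace (B * (A * D)) - trace (B * (D * A))"
    unfolding comm_def using A B D
    by (subst mult_minus_distrib_mat[of B m m]) (auto simp: trace_minus[of _ m])
  also have "trace (B * (D * A)) = trace (A * (B * D))"
    using trace_mult_commute[of "B * D" m m A] A B D by simp
  also have "trace (B * (A * D)) - trace (A * (B * D)) = - trace (comm A B * D)"
    unfolding comm_def using A B D
    by (subst minus_mult_distrib_mat[of _ m m]) (auto simp: trace_minus[of _ m])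
  finally show ?thesis .
qed

lemma trace_mult_ad_x:
  assumes "B \<in> carrier_mat (Suc n) (Suc n)" "D \<in> carrier_mat (Suc n) (Suc n)"
  shows "trace (B * ad_x n p D) = (-1) ^ p * trace (ad_x n p B * D)"
  using assms
proof (induction p arbitrary: D)
  case (Suc p)
  have "trace (B * ad_x n (Suc p) D) = (-1) ^ p * trace (ad_x n p B * comm (shift n) D)"
    unfolding ad_x_Suc_right using Suc by simp
  also have "trace (ad_x n p B * comm (shift n) D) = - trace (ad_x n (Suc p) B * D)"
    unfolding ad_x_Suc using Suc.prems by (intro trace_mult_comm_skew) auto
  finally show ?case
    by simp
qed simp

section \<open>Backward differences of polynomials\<close>

definition bdiff :: "'a::idom poly \<Rightarrow> 'a poly" where
  "bdiff Q = pcompose Q [:-1, 1:] - Q"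

lemma poly_bdiff: "poly (bdiff Q) x = poly Q (x - 1) - poly Q x"
  by (simp add: bdiff_def poly_pcompose)

lemma degree_pcompose_shift [simp]: "degree (pcompose Q [:-1, 1:]) = degree (Q :: 'a::idom poly)"
  by (simp add: degree_pcompose)

lemma coeff_pcompose_shift_top:
  fixes Q :: "'a::idom poly"
  assumes "degree Q \<le> m"
  shows "coeff (pcompose Q [:-1, 1:]) m = coeff Q m"
proof (cases "degree Q = m")
  case True
  then show ?thesis
    using lead_coeff_comp[of "[:-1, 1:]" Q] by simp
next
  case False
  then show ?thesis
    using assms by (simp add: coeff_eq_0)
qed

lemma bdiff_pCons: "bdiff (pCons a Q) = pCons 0 (bdiff Q) - pcompose Q [:-1, 1:]"
proof -
  have "bdiff (pCons a Q) = [:a:] + [:-1, 1:] * pcompose Q [:-1, 1:] - pCons a Q"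
    by (simp add: bdiff_def pcompose_pCons)
  also have "\<dots> = pCons 0 (bdiff Q) - pcompose Q [:-1, 1:]"
    by (simp add: bdiff_def algebra_simps pCons_one)
  finally show ?thesis .
qed

lemma bdiff_const: "degree Q = 0 \<Longrightarrow> bdiff Q = 0"
  by (metis degree_eq_zeroE pcompose_const bdiff_def diff_self)

lemma degree_coeff_bdiff:
  fixes Q :: "'a::idom poly"
  assumes "degree Q \<le> d" "1 \<le> d"
  shows "degree (bdiff Q) \<le> d - 1 \<and> coeff (bdiff Q) (d - 1) = - of_nat d * coeff Q d"
  using assms
proof (induction Q arbitrary: d rule: pCons_induct)
  case 0
  then show ?case
    by (simp add: bdiff_def)
next
  case (pCons a Q)
  have dQ: "degree Q \<le> d - 1"
    using pCons.prems by (cases "Q = 0") auto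
  show ?case
  proof (cases "d = 1")
    case True
    then obtain c where Qc: "Q = [:c:]"
      using dQ by (metis degree_eq_zeroE diff_self_eq_0 le_zero_eq)
    then have "bdiff (pCons a Q) = [:-c:]"
      unfolding bdiff_pCons by (simp add: bdiff_def)
    then show ?thesis
      using True Qc by simp
  next
    case False
    then have d2: "1 \<le> d - 1"
      using pCons.prems by simp
    have IH: "degree (bdiff Q) \<le> d - 1 - 1"
      "coeff (bdiff Q) (d - 1 - 1) = - of_nat (d - 1) * coeff Q (d - 1)"
      using pCons.IH[OF dQ d2] by simp_all
    have "degree (pCons 0 (bdiff Q)) \<le> d - 1"
      using IH d2 by (cases "bdiff Q = 0") auto
    then have "degree (bdiff (pCons a Q)) \<le> d - 1"
      unfolding bdiff_pCons using dQ by (intro degree_diff_le) simp_all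
    moreover have "coeff (bdiff (pCons a Q)) (d - 1) = - of_nat d * coeff (pCons a Q) d"
    proof -
      have "coeff (bdiff (pCons a Q)) (d - 1) = coeff (bdiff Q) (d - 1 - 1) - coeff Q (d - 1)"
        unfolding bdiff_pCons using d2 coeff_pcompose_shift_top[OF dQ]
        by (cases "d - 1") (auto simp: coeff_pCons)
      also have "\<dots> = - of_nat d * coeff Q (d - 1)"
        using IH d2 by (simp add: of_nat_diff algebra_simps)
      also have "\<dots> = - of_nat d * coeff (pCons a Q) d"
        using d2 by (cases d) auto
      finally show ?thesis .
    qed
    ultimately show ?thesis
      by simp
  qed
qed

lemma degree_bdiff_pow: "degree ((bdiff ^^ j) Q) \<le> degree Q - j"
proof (induction j)
  case (Suc j)
  show ?case
  proof (cases "degree ((bdiff ^^ j) Q) = 0")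
    case True
    then show ?thesis
      by (simp add: bdiff_const)
  next
    case False
    then have "degree (bdiff ((bdiff ^^ j) Q)) \<le> degree ((bdiff ^^ j) Q) - 1"
      using degree_coeff_bdiff[of "(bdiff ^^ j) Q" "degree ((bdiff ^^ j) Q)"] by simp
    then show ?thesis
      using Suc.IH by simp
  qed
qed simp

lemma bdiff_pow_eq_0:
  assumes "degree Q < j"
  shows "(bdiff ^^ j) Q = 0"
proof -
  obtain k where j: "j = Suc k" and "degree Q \<le> k"
    using assms by (cases j) auto
  then have "degree ((bdiff ^^ k) Q) = 0"
    using degree_bdiff_pow[of k Q] by simp
  then show ?thesis
    unfolding j by (simp add: bdiff_const)
qed

lemma coeff_bdiff_pow_nonzero:
  fixes Q :: "'a::{idom, ring_char_0} poly"
  assumes "degree Q \<le> d" "coeff Q d \<noteq> 0" "j \<le> d"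
  shows "degree ((bdiff ^^ j) Q) \<le> d - j \<and> coeff ((bdiff ^^ j) Q) (d - j) \<noteq> 0"
  using assms(3)
proof (induction j)
  case (Suc j)
  then have "degree ((bdiff ^^ j) Q) \<le> d - j" "coeff ((bdiff ^^ j) Q) (d - j) \<noteq> 0" "1 \<le> d - j"
    by auto
  with degree_coeff_bdiff[of "(bdiff ^^ j) Q" "d - j"] show ?case
    by (simp add: diff_diff_add)
qed (use assms in simp)

lemma bdiff_pow_degree:
  fixes Q :: "'a::{idom, ring_char_0} poly"
  assumes "Q \<noteq> 0"
  shows "\<exists>c. c \<noteq> 0 \<and> (bdiff ^^ degree Q) Q = [:c:]"
proof -
  have "degree ((bdiff ^^ degree Q) Q) = 0" "coeff ((bdiff ^^ degree Q) Q) 0 \<noteq> 0"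
    using coeff_bdiff_pow_nonzero[of Q "degree Q" "degree Q"] assms by auto
  then show ?thesis
    by (metis degree_eq_zeroE coeff_pCons_0)
qed

lemma poly_bdiff_pow_eq_0:
  assumes "\<And>y. x - int j \<le> y \<Longrightarrow> y \<le> x \<Longrightarrow> poly Q (of_int y) = 0"
  shows "poly ((bdiff ^^ j) Q) (of_int x) = 0"
  using assms
proof (induction j arbitrary: x)
  case (Suc j)
  have "poly ((bdiff ^^ j) Q) (of_int (x - 1)) = 0" "poly ((bdiff ^^ j) Q) (of_int x) = 0"
    by (rule Suc.IH; use Suc.prems in auto)+
  then show ?case
    by (simp add: poly_bdiff)
qed simp

section \<open>Band matrices and the test operators\<close>

definition band_mat :: "nat \<Rightarrow> int \<Rightarrow> 'a::field poly \<Rightarrow> 'a mat" where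
  "band_mat n e Q = mat (Suc n) (Suc n) (\<lambda>(r, c). if int c - int r = e then poly Q (of_nat r) else 0)"

lemma band_mat_carrier [simp]: "band_mat n e Q \<in> carrier_mat (Suc n) (Suc n)"
  by (simp add: band_mat_def)

lemma dim_band_mat [simp]: "dim_row (band_mat n e Q) = Suc n" "dim_col (band_mat n e Q) = Suc n"
  by (simp_all add: band_mat_def)

lemma index_band_mat:
  "r \<le> n \<Longrightarrow> c \<le> n \<Longrightarrow> band_mat n e Q $$ (r, c) = (if int c - int r = e then poly Q (of_nat r) else 0)"
  by (simp add: band_mat_def)

lemma band_mat_0 [simp]: "band_mat n e 0 = 0\<^sub>m (Suc n) (Suc n)"
  by (rule eq_matI) (auto simp: band_mat_def)

lemma band_mat_const: "band_mat n (- int i) [:c:] = c \<cdot>\<^sub>m mult_op n (monom 1 i)"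
  by (rule eq_matI) (auto simp: band_mat_def mult_op_def coeff_monom)

lemma comm_shift_band_mat:
  assumes low: "1 \<le> e \<Longrightarrow> poly Q (-1) = 0"
    and high: "1 \<le> e \<Longrightarrow> e \<le> int n + 1 \<Longrightarrow> poly Q (of_int (int n + 1 - e)) = 0"
  shows "comm (shift n) (band_mat n e Q) = band_mat n (e - 1) (bdiff Q)"
proof (rule eq_matI)
  fix r c assume "r < dim_row (band_mat n (e - 1) (bdiff Q))" "c < dim_col (band_mat n (e - 1) (bdiff Q))"
  then have r: "r \<le> n" and c: "c \<le> n"
    by (auto simp: band_mat_def)
  have L: "comm (shift n) (band_mat n e Q) $$ (r, c)
      = (if 1 \<le> r then band_mat n e Q $$ (r - 1, c) else 0)
        - (if c < n then band_mat n e Q $$ (r, Suc c) else 0)"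
    using r c by (simp add: index_comm_shift)
  show "comm (shift n) (band_mat n e Q) $$ (r, c) = band_mat n (e - 1) (bdiff Q) $$ (r, c)"
  proof (cases "int c - int r = e - 1")
    case False
    then show ?thesis
      unfolding L using r c by (simp add: index_band_mat of_nat_diff)
  next
    case diag: True
    have "(if 1 \<le> r then band_mat n e Q $$ (r - 1, c) else 0) = poly Q (of_nat r - 1)"
      using diag r c low by (cases "r = 0") (auto simp: index_band_mat of_nat_diff)
    moreover have "(if c < n then band_mat n e Q $$ (r, Suc c) else 0) = poly Q (of_nat r)"
    proof (cases "c < n")
      case False
      then have "int r = int n + 1 - e"
        using c diag by auto
      moreover have "(of_nat r :: 'a) = of_int (int r)"
        by simp
      ultimately show ?thesis
        using False high r by simp
    qed (use diag r c in \<open>simp add: index_band_mat\<close>)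
    ultimately show ?thesis
      unfolding L using diag r c by (simp add: index_band_mat poly_bdiff)
  qed
qed (simp_all add: comm_def)

lemma trace_band_mat_mult_op:
  assumes "i \<le> n"
  shows "trace (band_mat n (int i) Q * mult_op n f) = coeff f i * (\<Sum>r\<le>n - i. poly Q (of_nat r))"
proof -
  have diag: "(band_mat n (int i) Q * mult_op n f) $$ (r, r)
      = (if r + i \<le> n then poly Q (of_nat r) * coeff f i else 0)" if r: "r \<le> n" for r
  proof -
    have "(band_mat n (int i) Q * mult_op n f) $$ (r, r)
        = (\<Sum>c<Suc n. band_mat n (int i) Q $$ (r, c) * mult_op n f $$ (c, r))"
      using r by (simp add: scalar_prod_def lessThan_atLeast0)
    also have "\<dots> = (\<Sum>c<Suc n. if c = r + i then poly Q (of_nat r) * coeff f i else 0)"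
      using r by (intro sum.cong) (auto simp: index_band_mat index_mult_op)
    finally show ?thesis
      by (simp add: sum.delta)
  qed
  have "trace (band_mat n (int i) Q * mult_op n f)
      = (\<Sum>r<Suc n. if r + i \<le> n then poly Q (of_nat r) * coeff f i else 0)"
    unfolding trace_def using diag by simp
  also have "\<dots> = (\<Sum>r\<le>n - i. poly Q (of_nat r) * coeff f i)"
    using assms by (intro sum.mono_neutral_cong_right) auto
  finally show ?thesis
    by (simp add: sum_distrib_left mult.commute)
qed

definition test_poly :: "nat \<Rightarrow> nat \<Rightarrow> 'a::comm_ring_1 poly" where
  "test_poly n i = (\<Prod>l\<in>{1..i}. [:of_nat l, 1:]) * (\<Prod>l\<in>{0..<i}. [:of_nat (n - l), -1:])"

lemma poly_test_poly:
  "poly (test_poly n i) x = (\<Prod>l\<in>{1..i}. of_nat l + x) * (\<Prod>l\<in>{0..<i}. of_nat (n - l) - x)"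
  by (simp add: test_poly_def poly_prod)

lemma test_poly_nonzero: "test_poly n i \<noteq> (0 :: 'a::idom poly)"
  by (auto simp: test_poly_def)

lemma degree_test_poly: "degree (test_poly n i :: 'a::idom poly) = 2 * i"
  unfolding test_poly_def by (subst degree_mult_eq) (auto simp: degree_prod_sum_eq)

lemma poly_test_poly_neg_root:
  assumes "- int i \<le> x" "x \<le> -1"
  shows "poly (test_poly n i) (of_int x :: 'a::comm_ring_1) = 0"
proof -
  have "(\<Prod>l\<in>{1..i}. of_nat l + (of_int x :: 'a)) = 0"
  proof (rule prod_zero)
    have "nat (- x) \<in> {1..i}" "of_nat (nat (- x)) + (of_int x :: 'a) = 0"
      using assms by auto
    then show "\<exists>l\<in>{1..i}. of_nat l + (of_int x :: 'a) = 0" ..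
  qed simp
  then show ?thesis
    by (simp add: poly_test_poly)
qed

lemma poly_test_poly_top_root:
  assumes "i \<le> n" "int n - int i < x" "x \<le> int n"
  shows "poly (test_poly n i) (of_int x :: 'a::comm_ring_1) = 0"
proof -
  have "(\<Prod>l\<in>{0..<i}. of_nat (n - l) - (of_int x :: 'a)) = 0"
  proof (rule prod_zero)
    have "int (n - nat (int n - x)) = x"
      using assms by auto
    then have "of_nat (n - nat (int n - x)) = (of_int x :: 'a)"
      by (metis of_int_of_nat_eq)
    moreover have "nat (int n - x) \<in> {0..<i}"
      using assms by auto
    ultimately show "\<exists>l\<in>{0..<i}. of_nat (n - l) - (of_int x :: 'a) = 0"
      by force
  qed simp
  then show ?thesis
    by (simp add: poly_test_poly)
qed

lemma sum_poly_test_poly_nonzero: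
  assumes "i \<le> n"
  shows "(\<Sum>r\<le>n - i. poly (test_poly n i) (of_nat r) :: 'a::{comm_ring_1, ring_char_0}) \<noteq> 0"
proof -
  define h where "h r = (\<Prod>l\<in>{1..i}. l + r) * (\<Prod>l\<in>{0..<i}. n - l - r)" for r
  have "poly (test_poly n i) (of_nat r) = (of_nat (h r) :: 'a)" if "r \<le> n - i" for r
  proof -
    have "of_nat (n - l) - (of_nat r :: 'a) = of_nat (n - l - r)" if "l \<in> {0..<i}" for l
    proof -
      have "r \<le> n - l"
        using that \<open>r \<le> n - i\<close> by auto
      then show ?thesis
        by (simp only: of_nat_diff)
    qed
    then have "(\<Prod>l\<in>{0..<i}. of_nat (n - l) - (of_nat r :: 'a)) = (\<Prod>l\<in>{0..<i}. of_nat (n - l - r))"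
      by (rule prod.cong[OF refl])
    then show ?thesis
      unfolding poly_test_poly h_def by simp
  qed
  then have "(\<Sum>r\<le>n - i. poly (test_poly n i) (of_nat r) :: 'a) = of_nat (\<Sum>r\<le>n - i. h r)"
    by simp
  moreover have "0 < h 0"
    using assms by (auto simp: h_def prod_pos)
  then have "0 < (\<Sum>r\<le>n - i. h r)"
    using member_le_sum[of 0 "{..n - i}" h] by auto
  ultimately show ?thesis
    by (metis of_nat_eq_0_iff less_irrefl)
qed

definition test_mat :: "nat \<Rightarrow> nat \<Rightarrow> 'a::field mat" where
  "test_mat n i = band_mat n (int i) (test_poly n i)"

lemma ad_x_test_mat:
  assumes "i \<le> n"
  shows "ad_x n m (test_mat n i) = band_mat n (int i - int m) ((bdiff ^^ m) (test_poly n i))"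
proof (induction m)
  case 0
  then show ?case
    by (simp add: test_mat_def)
next
  case (Suc m)
  let ?Q = "(bdiff ^^ m) (test_poly n i) :: 'a poly"
  have "poly ?Q (of_int (-1)) = 0" if "1 \<le> int i - int m"
    using that by (intro poly_bdiff_pow_eq_0 poly_test_poly_neg_root) auto
  moreover have "poly ?Q (of_int (int n + 1 - (int i - int m))) = 0" if "1 \<le> int i - int m"
    using that assms by (intro poly_bdiff_pow_eq_0 poly_test_poly_top_root) auto
  ultimately have "comm (shift n) (band_mat n (int i - int m) ?Q) = band_mat n (int i - int m - 1) (bdiff ?Q)"
    by (intro comm_shift_band_mat) simp_all
  moreover have "int i - int (Suc m) = int i - int m - 1"
    by simp
  ultimately show ?case
    by (simp only: ad_x_Suc Suc.IH funpow.simps o_apply)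
qed

lemma ad_x_test_mat_eq_0:
  assumes "i \<le> n"
  shows "ad_x n (Suc (2 * i)) (test_mat n i :: 'a::field mat) = 0\<^sub>m (Suc n) (Suc n)"
  unfolding ad_x_test_mat[OF assms] by (subst bdiff_pow_eq_0) (simp_all add: degree_test_poly)

lemma ad_x_test_mat_monom:
  assumes "i \<le> n"
  obtains c where "c \<noteq> 0"
    "ad_x n (2 * i) (test_mat n i :: 'a::field_char_0 mat) = c \<cdot>\<^sub>m mult_op n (monom 1 i)"
proof -
  obtain c :: 'a where c: "c \<noteq> 0" "(bdiff ^^ (2 * i)) (test_poly n i) = [:c:]"
    using bdiff_pow_degree[OF test_poly_nonzero] by (auto simp: degree_test_poly)
  have "int i - int (2 * i) = - int i"
    by simp
  then have "ad_x n (2 * i) (test_mat n i) = c \<cdot>\<^sub>m mult_op n (monom 1 i)"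
    by (simp only: ad_x_test_mat[OF assms] c(2) band_mat_const)
  then show ?thesis
    by (rule that[OF c(1)])
qed

section \<open>The image of the order filtration under \<open>ad_x\<^sup>p\<close>\<close>

lemma monom_mult_poly_shift:
  fixes f :: "'a::comm_semiring_1 poly"
  assumes "\<And>i. i < v \<Longrightarrow> coeff f i = 0"
  shows "monom 1 v * poly_shift v f = f"
  by (rule poly_eqI) (use assms in \<open>auto simp: coeff_monom_mult coeff_poly_shift\<close>)

text \<open>Pairing \<open>ad_x\<^sup>p D\<close> with the test operator \<open>test_mat n i\<close>, which \<open>ad_x\<^sup>p\<close> kills
  when \<open>2 i < p\<close>, extracts the coefficient of \<open>x\<^sup>i\<close>.\<close>

lemma coeff_ad_x_eq_0:
  assumes D: "D \<in> carrier_mat (Suc n) (Suc n)" and f: "ad_x n p D = mult_op n f"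
    and i: "i \<le> n" "2 * i < p"
  shows "coeff f i = (0 :: 'a::field_char_0)"
proof -
  have "ad_x n p (test_mat n i) = ad_x n (p - Suc (2 * i)) (ad_x n (Suc (2 * i)) (test_mat n i))"
    using i(2) ad_x_add[of n "p - Suc (2 * i)" "Suc (2 * i)"] by simp
  then have "ad_x n p (test_mat n i) = (0\<^sub>m (Suc n) (Suc n) :: 'a mat)"
    by (simp add: ad_x_test_mat_eq_0[OF i(1)])
  then have "trace (test_mat n i * ad_x n p D) = 0"
    using D by (simp add: trace_mult_ad_x test_mat_def left_mult_zero_mat)
  moreover have "trace (test_mat n i * ad_x n p D)
      = coeff f i * (\<Sum>r\<le>n - i. poly (test_poly n i) (of_nat r))"
    unfolding f test_mat_def by (rule trace_band_mat_mult_op[OF i(1)])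
  ultimately show ?thesis
    using sum_poly_test_poly_nonzero[OF i(1)] by (metis mult_eq_0_iff)
qed

lemma ad_x_diff_ops_in_monom_ideal:
  assumes "p \<le> 2 * n" "D \<in> diff_ops n p"
  shows "\<exists>g. ad_x n p D = mult_op n (monom 1 ((p + 1) div 2) * g :: 'a::field_char_0 poly)"
proof -
  obtain f where f: "ad_x n p D = mult_op n f"
    using ad_x_diff_ops_mult_op[OF assms(2)] by blast
  have "coeff f i = 0" if "i < (p + 1) div 2" for i
    using assms that by (intro coeff_ad_x_eq_0[OF _ f]) (auto simp: diff_ops_iff)
  then have "f = monom 1 ((p + 1) div 2) * poly_shift ((p + 1) div 2) f"
    by (rule monom_mult_poly_shift[symmetric])
  then show ?thesis
    using f by metis
qed

lemma monom_ideal_in_ad_x_diff_ops: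
  assumes "p \<le> 2 * n"
  shows "mult_op n (monom 1 ((p + 1) div 2) * g) \<in> ad_x n p ` (diff_ops n p :: 'a::field_char_0 mat set)"
proof -
  define v where "v = (p + 1) div 2"
  have v: "v \<le> n" "p \<le> 2 * v"
    using assms by (auto simp: v_def)
  obtain c :: 'a where c: "c \<noteq> 0" "ad_x n (2 * v) (test_mat n v) = c \<cdot>\<^sub>m mult_op n (monom 1 v)"
    using ad_x_test_mat_monom[OF v(1)] by blast
  define D where "D = ad_x n (2 * v - p) (test_mat n v) * mult_op n (Polynomial.smult (inverse c) g)"
  have "ad_x n p (ad_x n (2 * v - p) (test_mat n v)) = ad_x n (2 * v) (test_mat n v :: 'a mat)"
    using v(2) by (metis ad_x_add le_add_diff_inverse)
  then have "ad_x n p D = ad_x n (2 * v) (test_mat n v) * mult_op n (Polynomial.smult (inverse c) g)"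
    unfolding D_def by (subst ad_x_mult_mult_op) (simp_all add: test_mat_def)
  also have "\<dots> = c \<cdot>\<^sub>m (mult_op n (monom 1 v) * mult_op n (Polynomial.smult (inverse c) g))"
    unfolding c(2) by (rule mult_smult_assoc_mat[OF mult_op_carrier mult_op_carrier])
  also have "\<dots> = mult_op n (monom 1 v * g)"
    using c(1) by (simp add: mult_op_mult smult_mult_op mult_smult_right)
  finally have D_image: "ad_x n p D = mult_op n (monom 1 v * g)" .
  moreover have "D \<in> carrier_mat (Suc n) (Suc n)"
    unfolding D_def by (rule mult_carrier_mat[OF ad_x_carrier mult_op_carrier]) (simp add: test_mat_def)
  ultimately have "D \<in> diff_ops n p"
    by (simp add: diff_ops_iff ad_x_Suc comm_mult_op)
  then show ?thesis
    using D_image unfolding v_def by (metis image_eqI)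
qed

lemma ad_x_image_diff_ops:
  assumes "p \<le> 2 * n"
  shows "ad_x n p ` (diff_ops n p :: 'a::field_char_0 mat set)
    = {mult_op n (monom 1 ((p + 1) div 2) * g) | g. True}"
  using ad_x_diff_ops_in_monom_ideal[OF assms] monom_ideal_in_ad_x_diff_ops[OF assms] by blast

lemma monom_ideal_eq_imp_le:
  assumes "w \<le> n"
    and "{mult_op n (monom 1 v * g) | g. True} = {mult_op n (monom 1 w * g :: 'a::field poly) | g. True}"
  shows "v \<le> w"
proof -
  have "mult_op n (monom 1 w * 1 :: 'a poly) \<in> {mult_op n (monom 1 w * g) | g. True}"
    by blast
  then obtain g where g: "mult_op n (monom 1 w :: 'a poly) = mult_op n (monom 1 v * g)"
    using assms(2) by auto
  have "(1 :: 'a) = mult_op n (monom 1 v * g) $$ (w, 0)"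
    using assms(1) by (simp flip: g add: index_mult_op)
  also have "\<dots> = (if w < v then 0 else coeff g (w - v))"
    using assms(1) by (simp add: index_mult_op coeff_monom_mult)
  finally show ?thesis
    by (cases "w < v") auto
qed

lemma vexp_eq:
  assumes "p \<le> 2 * n"
  shows "vexp TYPE('a::field_char_0) n p = (p + 1) div 2"
  unfolding vexp_def
proof (rule the_equality)
  show "(p + 1) div 2 \<le> n \<and> ad_x n p ` (diff_ops n p :: 'a mat set)
      = {mult_op n (monom 1 ((p + 1) div 2) * g) | g. True}"
    using ad_x_image_diff_ops[OF assms] assms by auto
next
  fix w
  assume w: "w \<le> n \<and> ad_x n p ` (diff_ops n p :: 'a mat set) = {mult_op n (monom 1 w * g) | g. True}"
  have eq: "{mult_op n (monom 1 ((p + 1) div 2) * g) | g. True} = {mult_op n (monom 1 w * g :: 'a poly) | g. True}"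
    using trans[OF ad_x_image_diff_ops[OF assms, symmetric] conjunct2[OF w]] .
  have "(p + 1) div 2 \<le> n"
    using assms by simp
  then show "w = (p + 1) div 2"
    using monom_ideal_eq_imp_le[OF conjunct1[OF w] eq] monom_ideal_eq_imp_le[OF _ eq[symmetric]] by fastforce
qed

lemma sum_half_ceiling: "(\<Sum>p = 1..2 * n. (p + 1) div 2) = n * (n + 1 :: nat)"
proof (induction n)
  case (Suc n)
  have "{1..2 * Suc n} = insert (2 * n + 2) (insert (2 * n + 1) {1..2 * n})"
    by auto
  then show ?case
    using Suc.IH by simp
qed simp

theorem corollary4:
  fixes n :: nat
  assumes "n \<ge> 1"
  shows "(\<Sum>p = 1..2 * n. vexp TYPE('a::field_char_0) n p) = n * (n + 1)"
proof -
  have "(\<Sum>p = 1..2 * n. vexp TYPE('a) n p) = (\<Sum>p = 1..2 * n. (p + 1) div 2)"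
    by (rule sum.cong) (auto simp: vexp_eq)
  also have "\<dots> = n * (n + 1)"
    by (rule sum_half_ceiling)
  finally show ?thesis .
qed

end
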